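(* Let $n\ge 2$ and let $k$ be a positive integer dividing $n$. Let $f=(f^m)_{m\in\mathbb{N}}$ be a family of functions $f^m:\{0,1\}^m\to\mathbb{R}_{\ge 0}$ such that $1^m$ is the unique optimum of $f^m$. Define $LO_k^f:\{0,1\}^n\to\mathbb{R}_{\ge0}$ by $$LO_k^f(x)=\sum_{i=0}^{n/k-1} f^k(x_{ik}x_{ik+1}\dots x_{ik+k-1})\cdot\prod_{j=0}^{ik-1}x_j .$$ Let $T$ be the run time of the (1+1) EA (with mutation probability $1/n$) maximizing $LO_k^f$ on bit strings of length $n$, and let $T_k^n$ be the run time of the (1+1) EA maximizing $f^k$ on bit strings of length $k$ but with bit flip probability $1/n$. Then $$E(T)=E(T_k^n)\,\frac{\left(\frac{n}{n-1}\right)^n-1}{\left(\frac{n}{n-1}\right)^k-1}\in\Theta\!\left(E(T_k^n)\frac{n}{k}\right).$$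
   Context: The (1+1) EA with bit flip probability $p$ maximizing $g:\{0,1\}^m\to\mathbb{R}$: start with $x$ drawn uniformly at random from $\{0,1\}^m$; in each iteration create $y$ by flipping each bit of $x$ independently with probability $p$, and set $x\gets y$ if $g(y)\ge g(x)$. The run time is the number of iterations until the optimum is first the current solution. *)

theory Defs
  imports "HOL-Probability.Probability"
begin

text \<open>Bit strings of length m are bool lists of length m (True = bit 1).\<close>

fun mutate :: "real \<Rightarrow> bool list \<Rightarrow> bool list pmf" where
  "mutate p [] = return_pmf []"
| "mutate p (b # bs) =
     bind_pmf (bernoulli_pmf p)
       (\<lambda>flip. map_pmf (\<lambda>r. (if flip then \<not> b else b) # r) (mutate p bs))"

definition ea_step :: "real \<Rightarrow> (bool list \<Rightarrow> real) \<Rightarrow> bool list \<Rightarrow> bool list pmf" where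
  "ea_step p g x = map_pmf (\<lambda>y. if g y \<ge> g x then y else x) (mutate p x)"

definition ea_init :: "nat \<Rightarrow> bool list pmf" where
  "ea_init m = pmf_of_set {xs :: bool list. length xs = m}"

definition is_opt :: "(bool list \<Rightarrow> real) \<Rightarrow> nat \<Rightarrow> bool list \<Rightarrow> bool" where
  "is_opt g m x \<longleftrightarrow> length x = m \<and> (\<forall>y. length y = m \<longrightarrow> g y \<le> g x)"

text \<open>Distribution of (current solution after t iterations, whether an optimum has
  been the current solution at some time 0..t).\<close>
fun ea_chain :: "real \<Rightarrow> (bool list \<Rightarrow> real) \<Rightarrow> nat \<Rightarrow> nat \<Rightarrow> (bool list \<times> bool) pmf" where
  "ea_chain p g m 0 = map_pmf (\<lambda>x. (x, is_opt g m x)) (ea_init m)"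
| "ea_chain p g m (Suc t) =
     bind_pmf (ea_chain p g m t)
       (\<lambda>(x, h). map_pmf (\<lambda>y. (y, h \<or> is_opt g m y)) (ea_step p g x))"

text \<open>Expected run time E(T) via the tail-sum formula E(T) = sum_t P(T > t),
  where T > t iff no optimum was the current solution at times 0..t.\<close>
definition ea_runtime :: "real \<Rightarrow> (bool list \<Rightarrow> real) \<Rightarrow> nat \<Rightarrow> ennreal" where
  "ea_runtime p g m = (\<Sum>t. ennreal (measure_pmf.prob (ea_chain p g m t) {s. \<not> snd s}))"

definition LO_k :: "(nat \<Rightarrow> bool list \<Rightarrow> real) \<Rightarrow> nat \<Rightarrow> nat \<Rightarrow> bool list \<Rightarrow> real" where
  "LO_k f n k x = (\<Sum>i<n div k. f k (take k (drop (i * k) x)) *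
                     (\<Prod>j<i * k. if x ! j then 1 else 0))"

definition LO_ratio :: "nat \<Rightarrow> nat \<Rightarrow> real" where
  "LO_ratio n k = ((real n / (real n - 1)) ^ n - 1) / ((real n / (real n - 1)) ^ k - 1)"

end

(*
  E(T) is the total mass of the expected-visit function V, V(y) being the expected number of
  iterations spent in y before the optimum is first reached. V is the unique nonnegative solution
  of the first-step equations V = V0 + K V on the non-optimal strings (V0 the initial
  distribution, K the transition kernel of the EA); uniqueness holds because every iteration
  reaches the optimum with probability at least min(p, 1-p)^m.

  For a fitness F(a r) = f(a) + [a = 1^k] G(r) on strings a r with |a| = k, |r| = L, the
  solution is explicit. While the prefix a is not optimal, selection ignores the suffix r, which
  therefore stays uniformly distributed: V_F(a r) = V_f(a) / 2^L. Once the prefix is optimal,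
  the suffix performs the EA on G, slowed down by the probability (1-p)^k that no prefix bit
  flips: V_F(1^k r) = V_G(r) / (1-p)^k. Summing, E(T_F) = E(T_f) + E(T_G) / (1-p)^k.
  LO_k^f on n bits is such a composition of f^k with LO_k^f on n-k bits, so by induction
  E(T) = E(T_k^n) * sum_{i < n/k} (1-1/n)^(-k i), a geometric sum whose terms lie between
  1 and (n/(n-1))^n <= e^2.
*)
theory Submission
  imports Defs
begin

section \<open>Bit strings and standard bit mutation\<close>

abbreviation ones :: "nat \<Rightarrow> bool list" where
  "ones m \<equiv> replicate m True"

definition bitstrings :: "nat \<Rightarrow> bool list set" where
  "bitstrings m = {xs. length xs = m}"

lemma mem_bitstrings [simp]: "xs \<in> bitstrings m \<longleftrightarrow> length xs = m"
  by (simp add: bitstrings_def)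

lemma finite_bitstrings [simp]: "finite (bitstrings m)"
  unfolding bitstrings_def using finite_lists_length_eq[of "UNIV :: bool set" m] by simp

lemma card_bitstrings: "card (bitstrings m) = 2 ^ m"
  unfolding bitstrings_def using card_lists_length_eq[of "UNIV :: bool set" m] by simp

lemma bitstrings_nonempty: "bitstrings m \<noteq> {}"
proof -
  have "ones m \<in> bitstrings m" by simp
  then show ?thesis by blast
qed

lemma bitstrings_add: "bitstrings (k + L) = (\<lambda>(a, r). a @ r) ` (bitstrings k \<times> bitstrings L)"
proof (intro set_eqI iffI)
  fix x assume "x \<in> bitstrings (k + L)"
  then have "x = (\<lambda>(a, r). a @ r) (take k x, drop k x)" "(take k x, drop k x) \<in> bitstrings k \<times> bitstrings L"
    by auto
  then show "x \<in> (\<lambda>(a, r). a @ r) ` (bitstrings k \<times> bitstrings L)" by blast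
qed auto

lemma sum_bitstrings_add:
  "(\<Sum>x\<in>bitstrings (k + L). h x) = (\<Sum>a\<in>bitstrings k. \<Sum>r\<in>bitstrings L. h (a @ r))"
proof -
  have "inj_on (\<lambda>(a, r). a @ r) (bitstrings k \<times> bitstrings L)"
    by (auto simp: inj_on_def)
  then have "(\<Sum>x\<in>bitstrings (k + L). h x) = (\<Sum>z\<in>bitstrings k \<times> bitstrings L. h ((\<lambda>(a, r). a @ r) z))"
    unfolding bitstrings_add by (rule sum.reindex[unfolded comp_def])
  then show ?thesis by (simp add: sum.cartesian_product split_beta)
qed

lemma measure_pmf_eq_sum_superset:
  assumes "finite S" "set_pmf M \<subseteq> S"
  shows "measure_pmf.prob M A = (\<Sum>z\<in>S \<inter> A. pmf M z)"
proof -
  have "measure_pmf.prob M A = measure_pmf.prob M (A \<inter> set_pmf M)"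
    by (simp add: measure_Int_set_pmf)
  also have "\<dots> = sum (pmf M) (A \<inter> set_pmf M)"
    using assms by (intro measure_measure_pmf_finite) (auto intro: finite_subset)
  also have "\<dots> = sum (pmf M) (S \<inter> A)"
    using assms by (intro sum.mono_neutral_left) (auto simp: set_pmf_eq)
  finally show ?thesis .
qed

fun mutation_prob :: "real \<Rightarrow> bool list \<Rightarrow> bool list \<Rightarrow> real" where
  "mutation_prob p [] [] = 1"
| "mutation_prob p (b # bs) (c # cs) = (if b = c then 1 - p else p) * mutation_prob p bs cs"
| "mutation_prob p _ _ = 0"

lemma pmf_map_Cons:
  "pmf (map_pmf ((#) d) P) ys = (case ys of [] \<Rightarrow> 0 | c # cs \<Rightarrow> if c = d then pmf P cs else 0)"
proof (cases "ys \<in> range ((#) d)")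
  case True
  then obtain cs where ys: "ys = d # cs" by auto
  have "inj ((#) d)" by (auto simp: inj_def)
  from pmf_map_inj'[OF this] show ?thesis unfolding ys by simp
next
  case False
  then have "ys \<notin> set_pmf (map_pmf ((#) d) P)" by auto
  then show ?thesis using False by (cases ys) (auto simp: set_pmf_eq)
qed

lemma pmf_mutate:
  assumes "0 \<le> p" "p \<le> 1"
  shows "pmf (mutate p xs) ys = mutation_prob p xs ys"
proof (induction xs arbitrary: ys)
  case Nil
  then show ?case by (cases ys) auto
next
  case (Cons b bs)
  have "pmf (mutate p (b # bs)) ys =
     (\<integral>flip. pmf (map_pmf ((#) (if flip then \<not> b else b)) (mutate p bs)) ys \<partial>bernoulli_pmf p)"
    by (simp only: mutate.simps pmf_bind)
  also have "\<dots> = pmf (map_pmf ((#) (\<not> b)) (mutate p bs)) ys * p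
                   + pmf (map_pmf ((#) b) (mutate p bs)) ys * (1 - p)"
    using assms by (simp only: integral_bernoulli_pmf if_True if_False)
  also have "\<dots> = mutation_prob p (b # bs) ys"
  proof (cases ys)
    case (Cons c cs)
    then show ?thesis using Cons.IH[of cs] by (cases b; cases c) (simp_all add: pmf_map_Cons)
  qed (simp add: pmf_map_Cons)
  finally show ?case .
qed

lemma set_pmf_mutate: "set_pmf (mutate p xs) \<subseteq> bitstrings (length xs)"
proof (induction xs)
qed auto

lemma mutation_prob_sym: "mutation_prob p xs ys = mutation_prob p ys xs"
  by (induction p xs ys rule: mutation_prob.induct) auto

lemma mutation_prob_nonneg: "0 \<le> p \<Longrightarrow> p \<le> 1 \<Longrightarrow> 0 \<le> mutation_prob p xs ys"
  by (induction p xs ys rule: mutation_prob.induct) auto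

lemma mutation_prob_append:
  "length a = length a' \<Longrightarrow> mutation_prob p (a @ r) (a' @ r') = mutation_prob p a a' * mutation_prob p r r'"
  by (induction a a' rule: list_induct2) auto

lemma mutation_prob_self: "mutation_prob p xs xs = (1 - p) ^ length xs"
  by (induction xs) auto

lemma mutation_prob_ge:
  assumes "0 \<le> p" "p \<le> 1" "length xs = length ys"
  shows "min p (1 - p) ^ length xs \<le> mutation_prob p xs ys"
  using assms(3)
proof (induction xs ys rule: list_induct2)
  case (Cons x xs y ys)
  have "min p (1 - p) * min p (1 - p) ^ length xs \<le> (if x = y then 1 - p else p) * mutation_prob p xs ys"
    using Cons.IH assms(1,2) by (intro mult_mono) auto
  then show ?case by simp
qed simp

lemma sum_mutation_prob:
  assumes "0 \<le> p" "p \<le> 1" "length x = m"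
  shows "(\<Sum>y\<in>bitstrings m. mutation_prob p x y) = 1"
  using sum_pmf_eq_1[OF finite_bitstrings set_pmf_mutate[of p x]] assms by (simp add: pmf_mutate)

definition rejection_prob :: "real \<Rightarrow> (bool list \<Rightarrow> real) \<Rightarrow> nat \<Rightarrow> bool list \<Rightarrow> real" where
  "rejection_prob p g m x = (\<Sum>z\<in>bitstrings m. if g z < g x then mutation_prob p x z else 0)"

lemma set_pmf_ea_step: "set_pmf (ea_step p g x) \<subseteq> bitstrings (length x)"
  using set_pmf_mutate[of p x] by (auto simp: ea_step_def)

lemma pmf_ea_step:
  assumes "0 \<le> p" "p \<le> 1" "length x = m" "length y = m"
  shows "pmf (ea_step p g x) y = (if g x \<le> g y then mutation_prob p x y else 0)
                                + (if y = x then rejection_prob p g m x else 0)"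
proof -
  let ?h = "\<lambda>z. if g x \<le> g z then z else x"
  have "pmf (ea_step p g x) y = measure_pmf.prob (mutate p x) (?h -` {y})"
    by (simp add: ea_step_def pmf_map)
  also have "\<dots> = (\<Sum>z\<in>bitstrings m \<inter> ?h -` {y}. mutation_prob p x z)"
    using measure_pmf_eq_sum_superset[OF finite_bitstrings set_pmf_mutate[of p x]] assms
    by (simp add: pmf_mutate)
  also have "\<dots> = (\<Sum>z\<in>bitstrings m. (if z = y \<and> g x \<le> g y then mutation_prob p x z else 0)
                                  + (if y = x \<and> g z < g x then mutation_prob p x z else 0))"
    by (simp add: sum.inter_restrict) (intro sum.cong; auto)
  also have "\<dots> = (if g x \<le> g y then mutation_prob p x y else 0)
                 + (if y = x then rejection_prob p g m x else 0)"
  proof -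
    have "(\<Sum>z\<in>bitstrings m. if z = y \<and> g x \<le> g y then mutation_prob p x z else 0)
        = (if g x \<le> g y then mutation_prob p x y else 0)"
      using assms by (simp add: if_distrib[symmetric] sum.delta' conj_commute)
    moreover have "(\<Sum>z\<in>bitstrings m. if y = x \<and> g z < g x then mutation_prob p x z else 0)
        = (if y = x then rejection_prob p g m x else 0)"
      by (simp add: rejection_prob_def)
    ultimately show ?thesis by (simp add: sum.distrib)
  qed
  finally show ?thesis .
qed

lemma sum_pmf_ea_step: "length x = m \<Longrightarrow> (\<Sum>y\<in>bitstrings m. pmf (ea_step p g x) y) = 1"
  using sum_pmf_eq_1[OF finite_bitstrings set_pmf_ea_step] by blast

section \<open>Expected visits before the optimum\<close>

definition inflow :: "real \<Rightarrow> (bool list \<Rightarrow> real) \<Rightarrow> nat \<Rightarrow> (bool list \<Rightarrow> real) \<Rightarrow> bool list \<Rightarrow> real" where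
  "inflow p g m V y = (\<Sum>x\<in>bitstrings m. V x * pmf (ea_step p g x) y)"

text \<open>\<open>V y\<close> stands for the expected number of iterations spent in \<open>y\<close> before the optimum is
  first reached; these are its first-step equations.\<close>
definition occupation_eq :: "real \<Rightarrow> (bool list \<Rightarrow> real) \<Rightarrow> nat \<Rightarrow> (bool list \<Rightarrow> real) \<Rightarrow> bool" where
  "occupation_eq p g m V \<longleftrightarrow>
     (\<forall>y\<in>bitstrings m. V y = (if is_opt g m y then 0 else 1 / 2 ^ m + inflow p g m V y))"

definition unsolved_pmf :: "real \<Rightarrow> (bool list \<Rightarrow> real) \<Rightarrow> nat \<Rightarrow> nat \<Rightarrow> bool list \<Rightarrow> real" where
  "unsolved_pmf p g m t y = pmf (ea_chain p g m t) (y, False)"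

definition transfer :: "real \<Rightarrow> (bool list \<Rightarrow> real) \<Rightarrow> nat \<Rightarrow> (bool list \<Rightarrow> real) \<Rightarrow> bool list \<Rightarrow> real" where
  "transfer p g m F y = (if is_opt g m y then 0 else inflow p g m F y)"

lemma set_pmf_ea_chain: "set_pmf (ea_chain p g m t) \<subseteq> bitstrings m \<times> UNIV"
proof (induction t)
  case 0
  show ?case using bitstrings_nonempty[of m] by (auto simp: ea_init_def bitstrings_def[symmetric])
next
  case (Suc t)
  then show ?case using set_pmf_ea_step[of p g] by fastforce
qed

lemma prob_unsolved:
  "measure_pmf.prob (ea_chain p g m t) {s. \<not> snd s} = (\<Sum>y\<in>bitstrings m. unsolved_pmf p g m t y)"
proof -
  have "measure_pmf.prob (ea_chain p g m t) {s. \<not> snd s}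
      = (\<Sum>z\<in>(bitstrings m \<times> UNIV) \<inter> {s. \<not> snd s}. pmf (ea_chain p g m t) z)"
    by (rule measure_pmf_eq_sum_superset[OF _ set_pmf_ea_chain]) simp
  also have "(bitstrings m \<times> UNIV) \<inter> {s. \<not> snd s} = (\<lambda>y. (y, False)) ` bitstrings m"
    by auto
  finally show ?thesis by (simp add: sum.reindex inj_on_def unsolved_pmf_def)
qed

lemma unsolved_pmf_0:
  "unsolved_pmf p g m 0 y = (if length y = m \<and> \<not> is_opt g m y then 1 / 2 ^ m else 0)"
proof -
  have "(\<lambda>x. (x, is_opt g m x)) -` {(y, False)} = (if is_opt g m y then {} else {y})"
    by auto
  then show ?thesis using bitstrings_nonempty[of m]
    by (auto simp: unsolved_pmf_def pmf_map measure_pmf_single ea_init_def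
        bitstrings_def[symmetric] card_bitstrings)
qed

lemma unsolved_pmf_Suc: "unsolved_pmf p g m (Suc t) = transfer p g m (unsolved_pmf p g m t)"
proof
  fix y
  let ?M = "ea_chain p g m t"
  let ?step = "\<lambda>s. if snd s \<or> is_opt g m y then 0 else pmf (ea_step p g (fst s)) y"
  have "pmf (map_pmf (\<lambda>y'. (y', h \<or> is_opt g m y')) (ea_step p g x)) (y, False)
      = ?step (x, h)" for x h
  proof -
    have "(\<lambda>y'. (y', h \<or> is_opt g m y')) -` {(y, False)} = (if h \<or> is_opt g m y then {} else {y})"
      by auto
    then show ?thesis by (simp add: pmf_map measure_pmf_single)
  qed
  then have "unsolved_pmf p g m (Suc t) y = (\<integral>s. ?step s \<partial>?M)"
    by (auto simp: unsolved_pmf_def pmf_bind split_beta intro!: Bochner_Integration.integral_cong)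
  also have "\<dots> = (\<Sum>s\<in>(\<lambda>x. (x, False)) ` bitstrings m. pmf ?M s * ?step s)"
    using set_pmf_ea_chain[of p g m t]
    by (subst integral_measure_pmf[where A = "(\<lambda>x. (x, False)) ` bitstrings m"]) (auto split: if_splits)
  also have "\<dots> = transfer p g m (unsolved_pmf p g m t) y"
  proof (cases "length y = m")
    case False
    then have "pmf (ea_step p g x) y = 0" if "length x = m" for x
      using that set_pmf_ea_step[of p g x] by (auto simp: set_pmf_eq)
    then show ?thesis using False by (auto simp: transfer_def inflow_def is_opt_def sum.reindex inj_on_def)
  qed (auto simp: transfer_def inflow_def sum.reindex inj_on_def unsolved_pmf_def)
  finally show "unsolved_pmf p g m (Suc t) y = transfer p g m (unsolved_pmf p g m t) y" .
qed

lemma transfer_nonneg: "(\<And>x. length x = m \<Longrightarrow> 0 \<le> F x) \<Longrightarrow> 0 \<le> transfer p g m F y"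
  by (auto simp: transfer_def inflow_def intro!: sum_nonneg)

lemma transfer_add:
  "(\<And>x. length x = m \<Longrightarrow> F x = F1 x + F2 x) \<Longrightarrow> transfer p g m F y = transfer p g m F1 y + transfer p g m F2 y"
  by (auto simp: transfer_def inflow_def sum.distrib[symmetric] algebra_simps intro!: sum.cong)

lemma pmf_ea_step_opt_ge:
  assumes "0 \<le> p" "p \<le> 1" "is_opt g m u" "length x = m"
  shows "min p (1 - p) ^ m \<le> pmf (ea_step p g x) u"
proof -
  have "0 \<le> rejection_prob p g m x"
    using assms by (auto simp: rejection_prob_def intro!: sum_nonneg mutation_prob_nonneg)
  then have "mutation_prob p x u \<le> pmf (ea_step p g x) u"
    using assms pmf_ea_step[of p x m u g] by (auto simp: is_opt_def)
  moreover have "min p (1 - p) ^ m \<le> mutation_prob p x u"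
    using assms mutation_prob_ge[of p x u] by (auto simp: is_opt_def)
  ultimately show ?thesis by linarith
qed

text \<open>Each step reaches the optimum with probability at least \<open>min p (1 - p) ^ m\<close>, so the
  transfer operator contracts the total mass of nonnegative functions.\<close>
lemma sum_transfer_le:
  assumes "0 \<le> p" "p \<le> 1" "is_opt g m u" and F: "\<And>x. length x = m \<Longrightarrow> 0 \<le> F x"
  shows "(\<Sum>y\<in>bitstrings m. transfer p g m F y) \<le> (1 - min p (1 - p) ^ m) * (\<Sum>x\<in>bitstrings m. F x)"
proof -
  have u: "length u = m" using assms by (simp add: is_opt_def)
  have escape: "(\<Sum>y\<in>bitstrings m. if is_opt g m y then 0 else pmf (ea_step p g x) y)
      \<le> 1 - min p (1 - p) ^ m" if x: "length x = m" for x
  proof -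
    have "(\<Sum>y\<in>bitstrings m. if is_opt g m y then 0 else pmf (ea_step p g x) y)
        \<le> (\<Sum>y\<in>bitstrings m. pmf (ea_step p g x) y - (if y = u then pmf (ea_step p g x) y else 0))"
      using assms by (intro sum_mono) auto
    also have "\<dots> = 1 - pmf (ea_step p g x) u"
      using u x sum_pmf_ea_step[OF x, of p g] by (simp add: sum_subtractf)
    finally show ?thesis using pmf_ea_step_opt_ge[OF assms(1-3) x] by linarith
  qed
  have "(\<Sum>y\<in>bitstrings m. transfer p g m F y)
      = (\<Sum>x\<in>bitstrings m. F x * (\<Sum>y\<in>bitstrings m. if is_opt g m y then 0 else pmf (ea_step p g x) y))"
    unfolding sum_distrib_left transfer_def inflow_def
    by (subst sum.swap) (auto intro!: sum.cong)
  also have "\<dots> \<le> (\<Sum>x\<in>bitstrings m. F x * (1 - min p (1 - p) ^ m))"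
    using F escape by (intro sum_mono mult_left_mono) auto
  finally show ?thesis by (simp add: sum_distrib_right mult.commute)
qed

lemma contraction_factor_bounds:
  fixes p :: real
  assumes "0 < p" "p < 1"
  shows "0 \<le> 1 - min p (1 - p) ^ m" "1 - min p (1 - p) ^ m < 1"
proof -
  have "0 < min p (1 - p)" "min p (1 - p) \<le> 1" using assms by auto
  then show "0 \<le> 1 - min p (1 - p) ^ m" "1 - min p (1 - p) ^ m < 1"
    by (auto simp: power_le_one)
qed

lemma transfer_iterate_nonneg:
  "(\<And>x. length x = m \<Longrightarrow> 0 \<le> F x) \<Longrightarrow> length y = m \<Longrightarrow> 0 \<le> (transfer p g m ^^ t) F y"
  by (induction t arbitrary: y) (auto intro: transfer_nonneg)

lemma sum_transfer_iterate_le: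
  assumes "0 < p" "p < 1" "is_opt g m u" and F: "\<And>x. length x = m \<Longrightarrow> 0 \<le> F x"
  shows "(\<Sum>y\<in>bitstrings m. (transfer p g m ^^ t) F y) \<le> (1 - min p (1 - p) ^ m) ^ t * (\<Sum>x\<in>bitstrings m. F x)"
proof (induction t)
  case (Suc t)
  let ?\<theta> = "1 - min p (1 - p) ^ m"
  have "(\<Sum>y\<in>bitstrings m. (transfer p g m ^^ Suc t) F y) \<le> ?\<theta> * (\<Sum>y\<in>bitstrings m. (transfer p g m ^^ t) F y)"
    using assms transfer_iterate_nonneg[OF F] by (simp add: sum_transfer_le)
  also have "\<dots> \<le> ?\<theta> * (?\<theta> ^ t * (\<Sum>x\<in>bitstrings m. F x))"
    using Suc contraction_factor_bounds[OF assms(1,2)] by (intro mult_left_mono) auto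
  finally show ?case by simp
qed simp

lemma unsolved_pmf_le:
  assumes "0 < p" "p < 1" "is_opt g m u"
  shows "unsolved_pmf p g m t y \<le> (1 - min p (1 - p) ^ m) ^ t"
proof (cases "length y = m")
  case True
  have iter: "unsolved_pmf p g m t = (transfer p g m ^^ t) (unsolved_pmf p g m 0)"
    by (induction t) (simp_all add: unsolved_pmf_Suc)
  have "unsolved_pmf p g m t y \<le> (\<Sum>y\<in>bitstrings m. unsolved_pmf p g m t y)"
    using True by (intro member_le_sum) (auto simp: unsolved_pmf_def)
  also have "\<dots> \<le> (1 - min p (1 - p) ^ m) ^ t * (\<Sum>x\<in>bitstrings m. unsolved_pmf p g m 0 x)"
    unfolding iter using assms by (intro sum_transfer_iterate_le) (auto simp: unsolved_pmf_def)
  also have "\<dots> \<le> (1 - min p (1 - p) ^ m) ^ t"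
    using prob_unsolved[of p g m 0, symmetric] contraction_factor_bounds[OF assms(1,2)]
    by (auto intro: mult_left_le)
  finally show ?thesis .
next
  case False
  then have "(y, False) \<notin> set_pmf (ea_chain p g m t)"
    using set_pmf_ea_chain[of p g m t] by auto
  then show ?thesis
    using contraction_factor_bounds[OF assms(1,2)] by (simp add: unsolved_pmf_def set_pmf_eq)
qed

lemma occupation_eq_exists:
  assumes "0 < p" "p < 1" "is_opt g m u"
  shows "\<exists>V. occupation_eq p g m V \<and> (\<forall>y. length y = m \<longrightarrow> 0 \<le> V y)"
proof -
  have summable: "summable (\<lambda>t. unsolved_pmf p g m t y)" for y
  proof (rule summable_comparison_test')
    show "summable (\<lambda>t. (1 - min p (1 - p) ^ m) ^ t)"
      using contraction_factor_bounds[OF assms(1,2)] by (intro summable_geometric) auto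
    show "norm (unsolved_pmf p g m t y) \<le> (1 - min p (1 - p) ^ m) ^ t" for t
      using unsolved_pmf_le[OF assms] by (simp add: unsolved_pmf_def)
  qed
  define V where "V y = (\<Sum>t. unsolved_pmf p g m t y)" for y
  have "V y = unsolved_pmf p g m 0 y + transfer p g m V y" for y
  proof -
    have "V y = unsolved_pmf p g m 0 y + (\<Sum>t. transfer p g m (unsolved_pmf p g m t) y)"
      using suminf_split_head[OF summable[of y]] by (simp add: V_def unsolved_pmf_Suc)
    also have "(\<Sum>t. transfer p g m (unsolved_pmf p g m t) y) = transfer p g m V y"
      using summable
      by (simp add: transfer_def inflow_def V_def suminf_sum summable_mult2 suminf_mult2)
    finally show ?thesis .
  qed
  then have "occupation_eq p g m V"
    by (auto simp: occupation_eq_def unsolved_pmf_0 transfer_def)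
  moreover have "0 \<le> V y" for y
    using summable by (auto simp: V_def unsolved_pmf_def intro!: suminf_nonneg)
  ultimately show ?thesis by blast
qed

lemma occupation_eq_unfold:
  assumes V: "occupation_eq p g m V" and y: "length y = m"
  shows "V y = (\<Sum>s<t. unsolved_pmf p g m s y) + (transfer p g m ^^ t) V y"
proof -
  let ?R = "\<lambda>t. (transfer p g m ^^ t) V"
  have R_Suc: "?R t y = unsolved_pmf p g m t y + ?R (Suc t) y" if "length y = m" for t y
    using that
  proof (induction t arbitrary: y)
    case 0
    then show ?case using V by (auto simp: occupation_eq_def unsolved_pmf_0 transfer_def)
  next
    case (Suc t)
    have "?R (Suc t) y = transfer p g m (?R t) y" by simp
    also have "\<dots> = transfer p g m (unsolved_pmf p g m t) y + transfer p g m (?R (Suc t)) y"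
      using Suc.IH by (rule transfer_add)
    also have "\<dots> = unsolved_pmf p g m (Suc t) y + ?R (Suc (Suc t)) y"
      by (simp add: unsolved_pmf_Suc)
    finally show ?case .
  qed
  show ?thesis
  proof (induction t)
    case (Suc t)
    then show ?case using R_Suc[OF y, of t] by simp
  qed simp
qed

text \<open>Uniqueness: the remainder of the unfolded equations is killed by the contraction.\<close>
lemma occupation_eq_sums:
  assumes "0 < p" "p < 1" "is_opt g m u" and V: "occupation_eq p g m V"
    and V_nonneg: "\<And>x. length x = m \<Longrightarrow> 0 \<le> V x" and y: "length y = m"
  shows "(\<lambda>t. unsolved_pmf p g m t y) sums V y"
proof -
  define R where "R t = (transfer p g m ^^ t) V y" for t
  let ?bound = "\<lambda>t. (1 - min p (1 - p) ^ m) ^ t * (\<Sum>x\<in>bitstrings m. V x)"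
  have R_le: "R t \<le> ?bound t" for t
  proof -
    have "R t \<le> (\<Sum>x\<in>bitstrings m. (transfer p g m ^^ t) V x)"
      unfolding R_def using y transfer_iterate_nonneg[of m V, OF V_nonneg] by (intro member_le_sum) auto
    also have "\<dots> \<le> ?bound t"
      using assms(1-3) V_nonneg by (rule sum_transfer_iterate_le)
    finally show ?thesis .
  qed
  have R_nonneg: "0 \<le> R t" for t
    using y transfer_iterate_nonneg[OF V_nonneg] by (simp add: R_def)
  have "?bound \<longlonglongrightarrow> 0"
    using contraction_factor_bounds[OF assms(1,2)] by (intro tendsto_mult_left_zero LIMSEQ_power_zero) auto
  then have "R \<longlonglongrightarrow> 0"
    using tendsto_sandwich[of "\<lambda>_. 0" R sequentially ?bound 0] R_nonneg R_le by simp
  then have "(\<lambda>t. V y - R t) \<longlonglongrightarrow> V y - 0"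
    by (intro tendsto_diff tendsto_const)
  moreover have "V y - R t = (\<Sum>s<t. unsolved_pmf p g m s y)" for t
    using occupation_eq_unfold[OF V y, of t] by (simp add: R_def)
  ultimately show ?thesis by (simp add: sums_def)
qed

lemma ea_runtime_eq_sum_occupation:
  assumes "0 < p" "p < 1" "is_opt g m u" "occupation_eq p g m V"
    and "\<And>x. length x = m \<Longrightarrow> 0 \<le> V x"
  shows "ea_runtime p g m = ennreal (\<Sum>y\<in>bitstrings m. V y)"
proof -
  have "(\<lambda>t. \<Sum>y\<in>bitstrings m. unsolved_pmf p g m t y) sums (\<Sum>y\<in>bitstrings m. V y)"
    using assms by (intro sums_sum occupation_eq_sums) auto
  moreover have "0 \<le> (\<Sum>y\<in>bitstrings m. unsolved_pmf p g m t y)" for t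
    by (auto simp: unsolved_pmf_def intro: sum_nonneg)
  ultimately show ?thesis
    unfolding ea_runtime_def prob_unsolved by (subst suminf_ennreal2) (auto simp: sums_iff)
qed

lemma ea_runtime_length_0:
  assumes "0 < p" "p < 1"
  shows "ea_runtime p g 0 = 0"
proof -
  have "is_opt g 0 []" by (simp add: is_opt_def)
  moreover have "occupation_eq p g 0 (\<lambda>_. 0)"
    by (simp add: occupation_eq_def is_opt_def)
  ultimately show ?thesis using ea_runtime_eq_sum_occupation[OF assms] by fastforce
qed

lemma occupation_eq_opt: "occupation_eq p g m V \<Longrightarrow> is_opt g m u \<Longrightarrow> V u = 0"
  by (simp add: occupation_eq_def is_opt_def)

lemma sum_inflow: "(\<Sum>y\<in>bitstrings m. inflow p g m V y) = (\<Sum>x\<in>bitstrings m. V x)"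
proof -
  have "(\<Sum>y\<in>bitstrings m. inflow p g m V y) = (\<Sum>x\<in>bitstrings m. V x * (\<Sum>y\<in>bitstrings m. pmf (ea_step p g x) y))"
    unfolding inflow_def sum_distrib_left by (rule sum.swap)
  then show ?thesis by (simp add: sum_pmf_ea_step)
qed

definition unique_maximizer :: "(bool list \<Rightarrow> real) \<Rightarrow> nat \<Rightarrow> bool list \<Rightarrow> bool" where
  "unique_maximizer g m u \<longleftrightarrow> length u = m \<and> (\<forall>y. length y = m \<longrightarrow> y \<noteq> u \<longrightarrow> g y < g u)"

lemma unique_maximizer_is_opt: "unique_maximizer g m u \<Longrightarrow> is_opt g m u"
  unfolding unique_maximizer_def is_opt_def by force

lemma is_opt_iff_eq_unique_maximizer:
  "unique_maximizer g m u \<Longrightarrow> length y = m \<Longrightarrow> is_opt g m y \<longleftrightarrow> y = u"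
  unfolding unique_maximizer_def is_opt_def by force

text \<open>The optimum is entered exactly once, unless the run starts in it.\<close>
lemma inflow_unique_maximizer:
  assumes V: "occupation_eq p g m V" and u: "unique_maximizer g m u"
  shows "inflow p g m V u = 1 - 1 / 2 ^ m"
proof -
  have "V y + (if y = u then 1 / 2 ^ m + inflow p g m V u else 0) = 1 / 2 ^ m + inflow p g m V y"
    if "length y = m" for y
    using V that is_opt_iff_eq_unique_maximizer[OF u that] by (auto simp: occupation_eq_def)
  then have "(\<Sum>y\<in>bitstrings m. V y + (if y = u then 1 / 2 ^ m + inflow p g m V u else 0))
      = (\<Sum>y\<in>bitstrings m. 1 / 2 ^ m + inflow p g m V y)"
    by (intro sum.cong) auto
  moreover have "length u = m" using u by (simp add: unique_maximizer_def)
  ultimately show ?thesis by (simp add: sum.distrib sum_inflow card_bitstrings)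
qed

section \<open>Blockwise composition of fitness functions\<close>

locale block_fitness =
  fixes k L :: nat and f G F :: "bool list \<Rightarrow> real"
  assumes f_max: "unique_maximizer f k (ones k)"
    and G_nonneg: "\<And>r. length r = L \<Longrightarrow> 0 \<le> G r"
    and G_max: "unique_maximizer G L (ones L)"
    and F_append: "\<And>a r. length a = k \<Longrightarrow> length r = L \<Longrightarrow>
                     F (a @ r) = f a + (if a = ones k then G r else 0)"
begin

lemma f_less: "length a = k \<Longrightarrow> a \<noteq> ones k \<Longrightarrow> f a < f (ones k)"
  using f_max by (simp add: unique_maximizer_def)

lemma G_less: "length r = L \<Longrightarrow> r \<noteq> ones L \<Longrightarrow> G r < G (ones L)"
  using G_max by (simp add: unique_maximizer_def)

lemma F_unique_maximizer: "unique_maximizer F (k + L) (ones (k + L))"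
  unfolding unique_maximizer_def
proof (intro conjI allI impI)
  fix y assume y: "length y = k + L" "y \<noteq> ones (k + L)"
  define a r where "a = take k y" and "r = drop k y"
  have ar: "y = a @ r" "length a = k" "length r = L" using y(1) by (auto simp: a_def r_def)
  have "F y < f (ones k) + G (ones L)"
  proof (cases "a = ones k")
    case True
    then have "r \<noteq> ones L" using y(2) ar(1) by (auto simp: replicate_add)
    then show ?thesis using True ar F_append G_less by auto
  next
    case False
    then show ?thesis using ar F_append f_less G_nonneg[of "ones L"] by fastforce
  qed
  then show "F y < F (ones (k + L))" by (simp add: replicate_add F_append)
qed simp

lemma F_nonneg:
  assumes "\<And>a. length a = k \<Longrightarrow> 0 \<le> f a" "length y = k + L"
  shows "0 \<le> F y"
proof -
  have "y = take k y @ drop k y" by simp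
  then show ?thesis using assms F_append[of "take k y" "drop k y"] G_nonneg[of "drop k y"] by simp
qed

lemma F_append_suboptimal: "length a = k \<Longrightarrow> a \<noteq> ones k \<Longrightarrow> length r = L \<Longrightarrow> F (a @ r) = f a"
  by (simp add: F_append)

lemma le_F_append_suboptimal_iff:
  assumes "length a = k" "a \<noteq> ones k" "length c = k" "length s = L"
  shows "f a \<le> F (c @ s) \<longleftrightarrow> f a \<le> f c"
  using assms F_append f_less[OF assms(1,2)] G_nonneg[of s] by auto

lemma F_append_optimal_le_iff:
  assumes "length r = L" "length c = k" "length s = L"
  shows "F (ones k @ r) \<le> F (c @ s) \<longleftrightarrow> c = ones k \<and> G r \<le> G s"
  using assms F_append f_less[OF assms(2)] G_nonneg[of r] by auto

end

locale block_composition = block_fitness +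
  fixes p :: real
  assumes p_pos: "0 < p" and p_less_1: "p < 1"
begin

lemma p_bounds: "0 \<le> p" "p \<le> 1"
  using p_pos p_less_1 by auto

lemma rejection_prob_suboptimal_prefix:
  assumes a: "length a = k" "a \<noteq> ones k" and r: "length r = L"
  shows "rejection_prob p F (k + L) (a @ r) = rejection_prob p f k a"
proof -
  have "rejection_prob p F (k + L) (a @ r)
      = (\<Sum>c\<in>bitstrings k. \<Sum>s\<in>bitstrings L. (if f c < f a then mutation_prob p a c else 0) * mutation_prob p r s)"
    unfolding rejection_prob_def sum_bitstrings_add using a r
    by (intro sum.cong refl)
       (simp add: F_append_suboptimal mutation_prob_append not_le[symmetric] le_F_append_suboptimal_iff)
  also have "\<dots> = rejection_prob p f k a"
    using r p_bounds by (simp add: sum_distrib_left[symmetric] sum_mutation_prob rejection_prob_def)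
  finally show ?thesis .
qed

lemma rejection_prob_optimal_prefix:
  assumes r: "length r = L"
  shows "rejection_prob p F (k + L) (ones k @ r) = 1 - (1 - p) ^ k + (1 - p) ^ k * rejection_prob p G L r"
proof -
  let ?\<rho> = "rejection_prob p G L r"
  have inner: "(\<Sum>s\<in>bitstrings L. if F (c @ s) < F (ones k @ r) then mutation_prob p (ones k @ r) (c @ s) else 0)
      = mutation_prob p (ones k) c * (if c = ones k then ?\<rho> else 1)" if c: "length c = k" for c
  proof -
    have "(\<Sum>s\<in>bitstrings L. if F (c @ s) < F (ones k @ r) then mutation_prob p (ones k @ r) (c @ s) else 0)
        = (\<Sum>s\<in>bitstrings L. mutation_prob p (ones k) c *
             (if c = ones k then (if G s < G r then mutation_prob p r s else 0) else mutation_prob p r s))"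
      using c r by (intro sum.cong refl) (auto simp: not_le[symmetric] F_append_optimal_le_iff mutation_prob_append)
    also have "\<dots> = mutation_prob p (ones k) c * (if c = ones k then ?\<rho> else 1)"
      using r p_bounds by (simp add: sum_distrib_left[symmetric] rejection_prob_def sum_mutation_prob)
    finally show ?thesis .
  qed
  have "rejection_prob p F (k + L) (ones k @ r)
      = (\<Sum>c\<in>bitstrings k. mutation_prob p (ones k) c * (if c = ones k then ?\<rho> else 1))"
    unfolding rejection_prob_def[of p F] sum_bitstrings_add by (intro sum.cong refl) (simp add: inner)
  also have "\<dots> = (\<Sum>c\<in>bitstrings k. mutation_prob p (ones k) c
                   + (if c = ones k then (1 - p) ^ k * (?\<rho> - 1) else 0))"
    by (intro sum.cong refl) (auto simp: mutation_prob_self algebra_simps)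
  also have "\<dots> = 1 - (1 - p) ^ k + (1 - p) ^ k * ?\<rho>"
    using p_bounds by (simp add: sum.distrib sum_mutation_prob algebra_simps)
  finally show ?thesis .
qed

lemma sum_pmf_ea_step_suboptimal_prefix:
  assumes a: "length a = k" "a \<noteq> ones k" and a': "length a' = k" and r': "length r' = L"
  shows "(\<Sum>r\<in>bitstrings L. pmf (ea_step p F (a @ r)) (a' @ r')) = pmf (ea_step p f a) a'"
proof -
  let ?c = "if f a \<le> f a' then mutation_prob p a a' else 0"
  let ?\<rho> = "if a' = a then rejection_prob p f k a else 0"
  have "pmf (ea_step p F (a @ r)) (a' @ r') = ?c * mutation_prob p r' r + (if r = r' then ?\<rho> else 0)"
    if r: "length r = L" for r
    using pmf_ea_step[OF p_bounds, of "a @ r" "k + L" "a' @ r'" F] a a' r r'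
    by (simp add: F_append_suboptimal le_F_append_suboptimal_iff mutation_prob_append
        rejection_prob_suboptimal_prefix mutation_prob_sym)
  then have "(\<Sum>r\<in>bitstrings L. pmf (ea_step p F (a @ r)) (a' @ r'))
      = (\<Sum>r\<in>bitstrings L. ?c * mutation_prob p r' r + (if r = r' then ?\<rho> else 0))"
    by (intro sum.cong) auto
  also have "\<dots> = ?c * (\<Sum>r\<in>bitstrings L. mutation_prob p r' r) + ?\<rho>"
    using r' by (simp add: sum.distrib sum_distrib_left)
  also have "\<dots> = pmf (ea_step p f a) a'"
    using a a' r' by (simp add: sum_mutation_prob p_bounds pmf_ea_step)
  finally show ?thesis .
qed

lemma pmf_ea_step_optimal_prefix:
  assumes r: "length r = L" and a': "length a' = k" and r': "length r' = L"
  shows "pmf (ea_step p F (ones k @ r)) (a' @ r')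
       = (if a' = ones k then (1 - p) ^ k * pmf (ea_step p G r) r' + (if r' = r then 1 - (1 - p) ^ k else 0)
          else 0)"
proof (cases "a' = ones k")
  case True
  have "pmf (ea_step p F (ones k @ r)) (ones k @ r')
      = (if G r \<le> G r' then (1 - p) ^ k * mutation_prob p r r' else 0)
        + (if r' = r then 1 - (1 - p) ^ k + (1 - p) ^ k * rejection_prob p G L r else 0)"
    using pmf_ea_step[OF p_bounds, of "ones k @ r" "k + L" "ones k @ r'" F] assms
    by (simp add: F_append_optimal_le_iff mutation_prob_append mutation_prob_self
        rejection_prob_optimal_prefix power_add)
  then show ?thesis
    using True pmf_ea_step[OF p_bounds, of r L r' G] assms by (simp add: algebra_simps)
next
  case False
  then show ?thesis
    using pmf_ea_step[OF p_bounds, of "ones k @ r" "k + L" "a' @ r'" F] assms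
    by (simp add: F_append_optimal_le_iff)
qed

end

definition block_occupation ::
  "real \<Rightarrow> nat \<Rightarrow> nat \<Rightarrow> (bool list \<Rightarrow> real) \<Rightarrow> (bool list \<Rightarrow> real) \<Rightarrow> bool list \<Rightarrow> real" where
  "block_occupation p k L Vf VG x =
     (if take k x = ones k then VG (drop k x) / (1 - p) ^ k else Vf (take k x) / 2 ^ L)"

lemma block_occupation_append:
  "length a = k \<Longrightarrow> block_occupation p k L Vf VG (a @ r) = (if a = ones k then VG r / (1 - p) ^ k else Vf a / 2 ^ L)"
  by (simp add: block_occupation_def)

lemma sum_block_occupation:
  assumes "Vf (ones k) = 0"
  shows "(\<Sum>x\<in>bitstrings (k + L). block_occupation p k L Vf VG x)
       = (\<Sum>a\<in>bitstrings k. Vf a) + (\<Sum>r\<in>bitstrings L. VG r) / (1 - p) ^ k"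
proof -
  have "(\<Sum>r\<in>bitstrings L. block_occupation p k L Vf VG (a @ r))
      = Vf a + (if a = ones k then (\<Sum>r\<in>bitstrings L. VG r) / (1 - p) ^ k else 0)"
    if "length a = k" for a
    using that assms by (simp add: block_occupation_append sum_divide_distrib card_bitstrings)
  then show ?thesis by (simp add: sum_bitstrings_add sum.distrib)
qed

context block_composition
begin

lemma inflow_block_occupation:
  assumes Vf: "Vf (ones k) = 0" and a': "length a' = k" and r': "length r' = L"
  shows "inflow p F (k + L) (block_occupation p k L Vf VG) (a' @ r')
       = inflow p f k Vf a' / 2 ^ L
         + (if a' = ones k then inflow p G L VG r' + (1 - (1 - p) ^ k) / (1 - p) ^ k * VG r' else 0)"
proof -
  let ?X = "if a' = ones k then inflow p G L VG r' + (1 - (1 - p) ^ k) / (1 - p) ^ k * VG r' else 0"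
  have q: "0 < (1 - p) ^ k" using p_less_1 by simp
  have "(\<Sum>r\<in>bitstrings L. block_occupation p k L Vf VG (a @ r) * pmf (ea_step p F (a @ r)) (a' @ r'))
      = Vf a * pmf (ea_step p f a) a' / 2 ^ L + (if a = ones k then ?X else 0)" if a: "length a = k" for a
  proof (cases "a = ones k")
    case True
    have "(\<Sum>r\<in>bitstrings L. block_occupation p k L Vf VG (a @ r) * pmf (ea_step p F (a @ r)) (a' @ r'))
        = (\<Sum>r\<in>bitstrings L. if a' = ones k then VG r * pmf (ea_step p G r) r'
             + (if r' = r then (1 - (1 - p) ^ k) / (1 - p) ^ k * VG r else 0) else 0)"
      using True a' r' q p_less_1
      by (intro sum.cong refl) (simp add: block_occupation_append pmf_ea_step_optimal_prefix field_simps)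
    then show ?thesis using True Vf r' by (simp add: sum.distrib inflow_def)
  next
    case False
    have "(\<Sum>r\<in>bitstrings L. Vf a / 2 ^ L * pmf (ea_step p F (a @ r)) (a' @ r'))
        = Vf a / 2 ^ L * (\<Sum>r\<in>bitstrings L. pmf (ea_step p F (a @ r)) (a' @ r'))"
      by (rule sum_distrib_left[symmetric])
    then show ?thesis
      using False a a' r' by (simp add: block_occupation_append sum_pmf_ea_step_suboptimal_prefix)
  qed
  then show ?thesis
    by (simp add: inflow_def sum_bitstrings_add sum.distrib sum_divide_distrib)
qed

lemma block_occupation_eq_at:
  assumes Vf: "occupation_eq p f k Vf" and VG: "occupation_eq p G L VG"
    and a': "length a' = k" and r': "length r' = L"
  shows "block_occupation p k L Vf VG (a' @ r')
       = (if is_opt F (k + L) (a' @ r') then 0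
          else 1 / 2 ^ (k + L) + inflow p F (k + L) (block_occupation p k L Vf VG) (a' @ r'))"
proof -
  let ?V = "block_occupation p k L Vf VG"
  have Vf_opt: "Vf (ones k) = 0"
    using occupation_eq_opt[OF Vf unique_maximizer_is_opt[OF f_max]] .
  have F_opt_iff: "is_opt F (k + L) (a' @ r') \<longleftrightarrow> a' = ones k \<and> r' = ones L"
    using is_opt_iff_eq_unique_maximizer[OF F_unique_maximizer] a' r' by (auto simp: replicate_add)
  show ?thesis
  proof (cases "a' = ones k")
    case False
    have "Vf a' = 1 / 2 ^ k + inflow p f k Vf a'"
      using Vf a' False is_opt_iff_eq_unique_maximizer[OF f_max a'] by (auto simp: occupation_eq_def)
    then show ?thesis
      using False a' r' F_opt_iff
      by (simp add: block_occupation_append inflow_block_occupation[of Vf, OF Vf_opt] power_add add_divide_distrib)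
  next
    case True
    show ?thesis
    proof (cases "r' = ones L")
      case False
      have q: "0 < (1 - p) ^ k" using p_less_1 by simp
      have identity: "v / q = 1 / 2 ^ (k + L) + ((1 - 1 / 2 ^ k) / 2 ^ L + X + (1 - q) / q * v)"
        if "0 < q" "v = 1 / 2 ^ L + X" for q v X :: real
        using that(1) by (simp add: that(2) field_simps power_add)
      have "VG r' = 1 / 2 ^ L + inflow p G L VG r'"
        using VG r' False is_opt_iff_eq_unique_maximizer[OF G_max r'] by (auto simp: occupation_eq_def)
      then have "?V (a' @ r') = 1 / 2 ^ (k + L) + ((1 - 1 / 2 ^ k) / 2 ^ L + inflow p G L VG r'
                                 + (1 - (1 - p) ^ k) / (1 - p) ^ k * VG r')"
        using True q by (simp add: block_occupation_append identity)
      also have "\<dots> = 1 / 2 ^ (k + L) + inflow p F (k + L) ?V (a' @ r')"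
        using True r' inflow_unique_maximizer[OF Vf f_max]
        by (simp add: inflow_block_occupation[of Vf, OF Vf_opt])
      finally show ?thesis
        using True False a' r' F_opt_iff by simp
    next
      case True
      then show ?thesis
        using \<open>a' = ones k\<close> F_opt_iff occupation_eq_opt[OF VG unique_maximizer_is_opt[OF G_max]]
        by (simp add: block_occupation_append)
    qed
  qed
qed

lemma occupation_eq_block_occupation:
  assumes "occupation_eq p f k Vf" "occupation_eq p G L VG"
  shows "occupation_eq p F (k + L) (block_occupation p k L Vf VG)"
  unfolding occupation_eq_def
proof
  fix y assume "y \<in> bitstrings (k + L)"
  then show "block_occupation p k L Vf VG y = (if is_opt F (k + L) y then 0
      else 1 / 2 ^ (k + L) + inflow p F (k + L) (block_occupation p k L Vf VG) y)"
    using block_occupation_eq_at[OF assms, of "take k y" "drop k y"] by simp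
qed

theorem ea_runtime_block_composition:
  "ea_runtime p F (k + L) = ea_runtime p f k + ennreal (1 / (1 - p) ^ k) * ea_runtime p G L"
proof -
  obtain Vf where Vf: "occupation_eq p f k Vf" "\<And>a. length a = k \<Longrightarrow> 0 \<le> Vf a"
    using occupation_eq_exists[OF p_pos p_less_1 unique_maximizer_is_opt[OF f_max]] by blast
  obtain VG where VG: "occupation_eq p G L VG" "\<And>r. length r = L \<Longrightarrow> 0 \<le> VG r"
    using occupation_eq_exists[OF p_pos p_less_1 unique_maximizer_is_opt[OF G_max]] by blast
  have "0 \<le> block_occupation p k L Vf VG x" if "length x = k + L" for x
    using that Vf(2) VG(2) p_less_1 by (simp add: block_occupation_def)
  then have "ea_runtime p F (k + L) = ennreal (\<Sum>x\<in>bitstrings (k + L). block_occupation p k L Vf VG x)"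
    by (intro ea_runtime_eq_sum_occupation[OF p_pos p_less_1 unique_maximizer_is_opt[OF F_unique_maximizer]]
        occupation_eq_block_occupation Vf VG)
  also have "\<dots> = ennreal ((\<Sum>a\<in>bitstrings k. Vf a) + 1 / (1 - p) ^ k * (\<Sum>r\<in>bitstrings L. VG r))"
    using occupation_eq_opt[OF Vf(1) unique_maximizer_is_opt[OF f_max]] by (simp only: sum_block_occupation) simp
  also have "\<dots> = ennreal (\<Sum>a\<in>bitstrings k. Vf a) + ennreal (1 / (1 - p) ^ k * (\<Sum>r\<in>bitstrings L. VG r))"
    using Vf(2) VG(2) p_less_1 by (intro ennreal_plus) (auto intro!: sum_nonneg divide_nonneg_nonneg)
  also have "\<dots> = ennreal (\<Sum>a\<in>bitstrings k. Vf a) + ennreal (1 / (1 - p) ^ k) * ennreal (\<Sum>r\<in>bitstrings L. VG r)"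
    using VG(2) p_less_1 by (subst ennreal_mult) (auto intro!: sum_nonneg divide_nonneg_nonneg)
  also have "\<dots> = ea_runtime p f k + ennreal (1 / (1 - p) ^ k) * ea_runtime p G L"
    using ea_runtime_eq_sum_occupation[OF p_pos p_less_1 unique_maximizer_is_opt[OF f_max] Vf]
      ea_runtime_eq_sum_occupation[OF p_pos p_less_1 unique_maximizer_is_opt[OF G_max] VG] by simp
  finally show ?thesis .
qed

end

section \<open>Leading blocks\<close>

lemma prod_bit_indicators: "(\<Prod>j<m. if xs ! j then 1 else 0 :: real) = of_bool (\<forall>j<m. xs ! j)"
  by (induction m) (auto simp: less_Suc_eq)

lemma all_nth_append_iff:
  assumes "length a = k"
  shows "(\<forall>j<k + n. (a @ r) ! j) \<longleftrightarrow> a = ones k \<and> (\<forall>j<n. r ! j)"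
proof -
  have "(\<forall>j<k + n. (a @ r) ! j) \<longleftrightarrow> (\<forall>j<k. a ! j) \<and> (\<forall>j<n. r ! j)"
  proof safe
    fix j assume "\<forall>j<k + n. (a @ r) ! j" "j < n"
    then have "(a @ r) ! (k + j)" by simp
    then show "r ! j" using assms by (metis nth_append_length_plus)
  next
    fix j assume "\<forall>j<k. a ! j" "\<forall>j<n. r ! j" "j < k + n"
    then show "(a @ r) ! j" using assms by (auto simp: nth_append)
  qed (use assms in \<open>auto simp: nth_append\<close>)
  also have "(\<forall>j<k. a ! j) \<longleftrightarrow> a = ones k"
    using assms by (auto simp: list_eq_iff_nth_eq)
  finally show ?thesis .
qed

lemma LO_k_append:
  assumes k: "0 < k" and a: "length a = k" and r: "length r = N * k"
  shows "LO_k f (Suc N * k) k (a @ r) = f k a + (if a = ones k then LO_k f (N * k) k r else 0)"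
proof -
  define T where "T i x = f k (take k (drop (i * k) x)) * (\<Prod>j<i * k. if x ! j then 1 else 0)" for i x
  have "T (Suc i) (a @ r) = of_bool (a = ones k) * T i r" for i
  proof -
    have "drop (Suc i * k) (a @ r) = drop (i * k) r" using a by simp
    moreover have "(\<forall>j<Suc i * k. (a @ r) ! j) \<longleftrightarrow> a = ones k \<and> (\<forall>j<i * k. r ! j)"
      using all_nth_append_iff[OF a] by simp
    ultimately show ?thesis by (simp add: T_def prod_bit_indicators)
  qed
  moreover have "T 0 (a @ r) = f k a" using a by (simp add: T_def)
  moreover have LO: "LO_k f (M * k) k x = (\<Sum>i<M. T i x)" for M x
    using k by (simp add: LO_k_def T_def)
  ultimately show ?thesis
    unfolding LO sum.lessThan_Suc_shift by (simp add: sum_distrib_left[symmetric])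
qed

lemma LO_k_fitness:
  assumes k: "0 < k" and f_nonneg: "\<And>a. length a = k \<Longrightarrow> 0 \<le> f k a"
    and f_max: "unique_maximizer (f k) k (ones k)"
  shows "(\<forall>x. length x = N * k \<longrightarrow> 0 \<le> LO_k f (N * k) k x)
       \<and> unique_maximizer (LO_k f (N * k) k) (N * k) (ones (N * k))"
proof (induction N)
  case 0
  then show ?case by (simp add: LO_k_def unique_maximizer_def)
next
  case (Suc N)
  interpret block_fitness k "N * k" "f k" "LO_k f (N * k) k" "LO_k f (Suc N * k) k"
    by unfold_locales (use f_max Suc.IH LO_k_append[OF k] in blast)+
  show ?case using F_unique_maximizer F_nonneg f_nonneg by simp
qed

lemma ea_runtime_LO_k:
  assumes p: "0 < p" "p < 1" and k: "0 < k" and f_nonneg: "\<And>a. length a = k \<Longrightarrow> 0 \<le> f k a"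
    and f_max: "unique_maximizer (f k) k (ones k)"
  shows "ea_runtime p (LO_k f (N * k) k) (N * k) = ea_runtime p (f k) k * ennreal (\<Sum>i<N. (1 / (1 - p) ^ k) ^ i)"
proof (induction N)
  case 0
  then show ?case using ea_runtime_length_0[OF p] by simp
next
  case (Suc N)
  let ?c = "1 / (1 - p) ^ k" and ?S = "\<Sum>i<N. (1 / (1 - p) ^ k) ^ i"
  have c: "0 \<le> ?c" and S: "0 \<le> ?S" using p by (auto intro: sum_nonneg)
  interpret block_composition k "N * k" "f k" "LO_k f (N * k) k" "LO_k f (Suc N * k) k" p
    by unfold_locales (use p f_max LO_k_fitness[of k f N, OF k f_nonneg f_max] LO_k_append[OF k] in blast)+
  have "ea_runtime p (LO_k f (Suc N * k) k) (Suc N * k)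
      = ea_runtime p (f k) k + ennreal ?c * (ea_runtime p (f k) k * ennreal ?S)"
    using ea_runtime_block_composition Suc by simp
  also have "\<dots> = ea_runtime p (f k) k * ennreal (1 + ?c * ?S)"
  proof -
    have "E + ennreal c * (E * ennreal S) = E * ennreal (1 + c * S)" if "0 \<le> c" "0 \<le> S" for E c S
      using that by (simp add: ennreal_plus ennreal_mult distrib_left mult.left_commute)
    then show ?thesis using c S by blast
  qed
  also have "1 + ?c * ?S = (\<Sum>i<Suc N. ?c ^ i)"
    by (simp add: sum.lessThan_Suc_shift sum_distrib_left del: sum.lessThan_Suc)
  finally show ?case .
qed

lemma sum_power_bounds:
  fixes x C :: real
  assumes "1 \<le> x" "x ^ N \<le> C"
  shows "real N \<le> (\<Sum>i<N. x ^ i)" "(\<Sum>i<N. x ^ i) \<le> C * real N"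
proof -
  have "1 \<le> x ^ i \<and> x ^ i \<le> C" if "i < N" for i
    using assms that power_increasing[of i N x] by (auto intro: one_le_power)
  then show "real N \<le> (\<Sum>i<N. x ^ i)" "(\<Sum>i<N. x ^ i) \<le> C * real N"
    using sum_bounded_below[of "{..<N}" 1 "\<lambda>i. x ^ i"] sum_bounded_above[of "{..<N}" "\<lambda>i. x ^ i" C]
    by (auto simp: mult.commute)
qed

lemma power_n_div_n_minus_1_le_exp_2:
  assumes "2 \<le> n"
  shows "(real n / (real n - 1)) ^ n \<le> exp 2"
proof -
  have "real n / (real n - 1) = 1 + 1 / (real n - 1)"
    using assms by (simp add: field_simps)
  also have "\<dots> \<le> exp (1 / (real n - 1))"
    by (rule exp_ge_add_one_self)
  finally have "(real n / (real n - 1)) ^ n \<le> exp (1 / (real n - 1)) ^ n"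
    using assms by (intro power_mono) auto
  also have "\<dots> = exp (real n / (real n - 1))"
    by (simp add: exp_of_nat_mult[symmetric])
  also have "\<dots> \<le> exp 2"
    using assms by (simp add: field_simps)
  finally show ?thesis .
qed

lemma LO_ratio_eq_geometric_sum:
  assumes n: "2 \<le> n" and k: "0 < k" and dvd: "k dvd n"
  shows "LO_ratio n k = (\<Sum>i<n div k. ((real n / (real n - 1)) ^ k) ^ i)"
proof -
  let ?b = "real n / (real n - 1)"
  have "1 < ?b" using n by simp
  then have "?b ^ k \<noteq> 1" using k one_less_power[of ?b k] by linarith
  moreover have "(?b ^ k) ^ (n div k) = ?b ^ n"
    using dvd by (simp add: power_mult[symmetric])
  ultimately show ?thesis by (simp add: geometric_sum LO_ratio_def)
qed

lemma LO_ratio_bounds: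
  assumes n: "2 \<le> n" and k: "0 < k" and dvd: "k dvd n"
  shows "real n / real k \<le> LO_ratio n k" "LO_ratio n k \<le> exp 2 * (real n / real k)"
proof -
  let ?b = "real n / (real n - 1)"
  have "1 \<le> ?b ^ k" using n by (simp add: one_le_power)
  moreover have "(?b ^ k) ^ (n div k) \<le> exp 2"
    using dvd power_n_div_n_minus_1_le_exp_2[OF n] by (simp add: power_mult[symmetric])
  moreover have "real n / real k = real (n div k)"
    using dvd k by (simp add: real_of_nat_div)
  ultimately show "real n / real k \<le> LO_ratio n k" "LO_ratio n k \<le> exp 2 * (real n / real k)"
    using sum_power_bounds LO_ratio_eq_geometric_sum[OF assms] by metis+
qed

lemma ea_runtime_LO_k_eq:
  assumes n: "2 \<le> n" and k: "0 < k" and dvd: "k dvd n"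
    and f_nonneg: "\<And>a. length a = k \<Longrightarrow> 0 \<le> f k a" and f_max: "unique_maximizer (f k) k (ones k)"
  shows "ea_runtime (1 / real n) (LO_k f n k) n = ea_runtime (1 / real n) (f k) k * ennreal (LO_ratio n k)"
proof -
  have p: "0 < 1 / real n" "1 / real n < 1" using n by auto
  have "1 / (1 - 1 / real n) = real n / (real n - 1)" using n by (simp add: field_simps)
  then have q: "1 / (1 - 1 / real n) ^ k = (real n / (real n - 1)) ^ k"
    by (metis power_one_over)
  show ?thesis
    using ea_runtime_LO_k[OF p k, of f "n div k", OF f_nonneg f_max, unfolded q] dvd
      LO_ratio_eq_geometric_sum[OF n k dvd] by simp
qed

lemma ea_runtime_LO_k_bounds:
  assumes n: "2 \<le> n" and k: "0 < k" and dvd: "k dvd n"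
    and f_nonneg: "\<And>a. length a = k \<Longrightarrow> 0 \<le> f k a" and f_max: "unique_maximizer (f k) k (ones k)"
  shows "ea_runtime (1 / real n) (f k) k * ennreal (real n / real k) \<le> ea_runtime (1 / real n) (LO_k f n k) n"
    and "ea_runtime (1 / real n) (LO_k f n k) n
           \<le> ennreal (exp 2) * ea_runtime (1 / real n) (f k) k * ennreal (real n / real k)"
proof -
  let ?E = "ea_runtime (1 / real n) (f k) k"
  note eq = ea_runtime_LO_k_eq[of n k f, OF assms]
  have "?E * ennreal (real n / real k) \<le> ?E * ennreal (LO_ratio n k)"
    using LO_ratio_bounds[OF n k dvd] by (intro mult_left_mono ennreal_leI) auto
  then show "?E * ennreal (real n / real k) \<le> ea_runtime (1 / real n) (LO_k f n k) n"
    by (simp only: eq)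
  have "ea_runtime (1 / real n) (LO_k f n k) n = ?E * ennreal (LO_ratio n k)"
    by (rule eq)
  also have "\<dots> \<le> ?E * ennreal (exp 2 * (real n / real k))"
    using LO_ratio_bounds[OF n k dvd] by (intro mult_left_mono ennreal_leI) auto
  also have "\<dots> = ennreal (exp 2) * ?E * ennreal (real n / real k)"
    by (subst ennreal_mult) (auto simp: mult_ac)
  finally show "ea_runtime (1 / real n) (LO_k f n k) n \<le> ennreal (exp 2) * ?E * ennreal (real n / real k)" .
qed

theorem theorem1:
  "\<exists>c C :: real. c > 0 \<and> C > 0 \<and>
    (\<forall>(n::nat) (k::nat) (f :: nat \<Rightarrow> bool list \<Rightarrow> real).
      n \<ge> 2 \<longrightarrow> k > 0 \<longrightarrow> k dvd n \<longrightarrow>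
      (\<forall>m x. length x = m \<longrightarrow> f m x \<ge> 0) \<longrightarrow>
      (\<forall>m x. length x = m \<longrightarrow> x \<noteq> replicate m True \<longrightarrow> f m x < f m (replicate m True)) \<longrightarrow>
      ea_runtime (1 / real n) (LO_k f n k) n
        = ea_runtime (1 / real n) (f k) k * ennreal (LO_ratio n k)
      \<and> ennreal c * ea_runtime (1 / real n) (f k) k * ennreal (real n / real k)
          \<le> ea_runtime (1 / real n) (LO_k f n k) n
      \<and> ea_runtime (1 / real n) (LO_k f n k) n
          \<le> ennreal C * ea_runtime (1 / real n) (f k) k * ennreal (real n / real k))"
proof -
  have main: "ea_runtime (1 / real n) (LO_k f n k) n = ea_runtime (1 / real n) (f k) k * ennreal (LO_ratio n k)
      \<and> ennreal 1 * ea_runtime (1 / real n) (f k) k * ennreal (real n / real k)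
          \<le> ea_runtime (1 / real n) (LO_k f n k) n
      \<and> ea_runtime (1 / real n) (LO_k f n k) n
          \<le> ennreal (exp 2) * ea_runtime (1 / real n) (f k) k * ennreal (real n / real k)"
    if "2 \<le> n" "0 < k" "k dvd n" and f_nonneg: "\<forall>m x. length x = m \<longrightarrow> 0 \<le> f m x"
      and f_max: "\<forall>m x. length x = m \<longrightarrow> x \<noteq> ones m \<longrightarrow> f m x < f m (ones m)"
    for n k :: nat and f :: "nat \<Rightarrow> bool list \<Rightarrow> real"
  proof -
    have "unique_maximizer (f k) k (ones k)"
      by (simp add: unique_maximizer_def) (use f_max in blast)
    moreover have "\<And>a. length a = k \<Longrightarrow> 0 \<le> f k a" using f_nonneg by blast
    ultimately show ?thesis
      using ea_runtime_LO_k_eq[of n k f, OF that(1-3)] ea_runtime_LO_k_bounds[of n k f, OF that(1-3)]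
      by simp
  qed
  show ?thesis
    by (intro exI[of _ 1] exI[of _ "exp 2"] conjI[OF zero_less_one] conjI[OF exp_gt_zero] allI impI)
      (rule main)
qed

end
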